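(* Let $Q$ be a finite quiver of diameter $1$. The assignment $\sigma\mapsto(Q^+_\sigma,Q^-_\sigma)$ restricts to a bijection $P$ from the set $\sigma(Q)^{\mathrm a}$ of acyclic labelings of $Q$ onto the set $\mathrm R(F(Q))$ of Reedy structures on $F(Q)$.
   Context: $Q$ has diameter $1$ if no vertex is both the target of an arrow and the source of an arrow. $F(Q)$ is the free category on $Q$. A labeling is a map $\sigma\colon Q_1\to\{+,-\}$. It is acyclic if the orientation of the underlying undirected multigraph obtained by reversing the arrows labelled $-$ has no directed cycle. $Q^+_\sigma$ and $Q^-_\sigma$ are the wide subcategories of $F(Q)$ generated by the arrows labelled $+$ and $-$ respectively. A Reedy structure on a small category $J$ is a pair $(J^+,J^-)$ of wide subcategories for which there exists a degree function $\deg\colon\mathrm{ob}J\to\mathbb N$ such that: - non-identity morphisms of $J^+$ strictly raise degree; - non-identity morphisms of $J^-$ strictly lower degree; - every morphism factors uniquely as a morphism of $J^-$ followed by a morphism of $J^+$. The degree function itself is not part of the data. *)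

theory Defs
  imports Main "HOL-Library.FuncSet"
begin

record ('o,'m) cat =
  Ob   :: "'o set"
  Mor  :: "'m set"
  Dom  :: "'m \<Rightarrow> 'o"
  Cod  :: "'m \<Rightarrow> 'o"
  Idm  :: "'o \<Rightarrow> 'm"
  Comp :: "'m \<Rightarrow> 'm \<Rightarrow> 'm"   (* Comp g f = g \<circ> f, defined when Cod f = Dom g *)

definition wide_subcat :: "('o,'m) cat \<Rightarrow> 'm set \<Rightarrow> bool" where
  "wide_subcat C S \<longleftrightarrow>
     S \<subseteq> Mor C \<and>
     (\<forall>a\<in>Ob C. Idm C a \<in> S) \<and>
     (\<forall>f\<in>S. \<forall>g\<in>S. Cod C f = Dom C g \<longrightarrow> Comp C g f \<in> S)"

definition gen_wide :: "('o,'m) cat \<Rightarrow> 'm set \<Rightarrow> 'm set" where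
  "gen_wide C S = \<Inter>{T. wide_subcat C T \<and> S \<subseteq> T}"

definition reedy_structure :: "('o,'m) cat \<Rightarrow> 'm set \<Rightarrow> 'm set \<Rightarrow> bool" where
  "reedy_structure C Jp Jm \<longleftrightarrow>
     wide_subcat C Jp \<and> wide_subcat C Jm \<and>
     (\<exists>deg :: 'o \<Rightarrow> nat.
        (\<forall>f\<in>Jp. f \<noteq> Idm C (Dom C f) \<longrightarrow> deg (Dom C f) < deg (Cod C f)) \<and>
        (\<forall>f\<in>Jm. f \<noteq> Idm C (Dom C f) \<longrightarrow> deg (Cod C f) < deg (Dom C f)) \<and>
        (\<forall>f\<in>Mor C. \<exists>!p. p \<in> Jm \<times> Jp \<and> Cod C (fst p) = Dom C (snd p)
                              \<and> Comp C (snd p) (fst p) = f))"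

definition reedy_structures :: "('o,'m) cat \<Rightarrow> ('m set \<times> 'm set) set" where
  "reedy_structures C = {(Jp, Jm). reedy_structure C Jp Jm}"

record ('v,'e) quiver =
  Verts :: "'v set"
  Arrs  :: "'e set"
  src   :: "'e \<Rightarrow> 'v"
  tgt   :: "'e \<Rightarrow> 'v"

definition finite_quiver :: "('v,'e) quiver \<Rightarrow> bool" where
  "finite_quiver Q \<longleftrightarrow> finite (Verts Q) \<and> finite (Arrs Q) \<and>
     (\<forall>e\<in>Arrs Q. src Q e \<in> Verts Q \<and> tgt Q e \<in> Verts Q)"

definition diameter_one :: "('v,'e) quiver \<Rightarrow> bool" where
  "diameter_one Q \<longleftrightarrow>
     \<not> (\<exists>v. (\<exists>e\<in>Arrs Q. tgt Q e = v) \<and> (\<exists>e\<in>Arrs Q. src Q e = v))"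

definition is_path :: "('v,'e) quiver \<Rightarrow> 'v \<Rightarrow> 'e list \<Rightarrow> 'v \<Rightarrow> bool" where
  "is_path Q a es b \<longleftrightarrow> a \<in> Verts Q \<and> b \<in> Verts Q \<and> set es \<subseteq> Arrs Q \<and>
     (es = [] \<longrightarrow> a = b) \<and>
     (es \<noteq> [] \<longrightarrow> src Q (hd es) = a \<and> tgt Q (last es) = b \<and>
        (\<forall>i. Suc i < length es \<longrightarrow> tgt Q (es ! i) = src Q (es ! Suc i)))"

definition free_cat :: "('v,'e) quiver \<Rightarrow> ('v, 'v \<times> 'e list \<times> 'v) cat" where
  "free_cat Q = \<lparr> Ob = Verts Q,
     Mor = {(a, es, b). is_path Q a es b},
     Dom = (\<lambda>f. fst f),
     Cod = (\<lambda>f. snd (snd f)),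
     Idm = (\<lambda>a. (a, [], a)),
     Comp = (\<lambda>g f. (fst f, fst (snd f) @ fst (snd g), snd (snd g))) \<rparr>"

definition arr_mor :: "('v,'e) quiver \<Rightarrow> 'e \<Rightarrow> 'v \<times> 'e list \<times> 'v" where
  "arr_mor Q e = (src Q e, [e], tgt Q e)"

datatype sign = Plus | Minus

definition labelings :: "('v,'e) quiver \<Rightarrow> ('e \<Rightarrow> sign) set" where
  "labelings Q = Arrs Q \<rightarrow>\<^sub>E (UNIV :: sign set)"

definition orientation :: "('v,'e) quiver \<Rightarrow> ('e \<Rightarrow> sign) \<Rightarrow> ('v \<times> 'v) set" where
  "orientation Q \<sigma> =
     {(src Q e, tgt Q e) | e. e \<in> Arrs Q \<and> \<sigma> e = Plus} \<union>
     {(tgt Q e, src Q e) | e. e \<in> Arrs Q \<and> \<sigma> e = Minus}"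

definition acyclic_labeling :: "('v,'e) quiver \<Rightarrow> ('e \<Rightarrow> sign) \<Rightarrow> bool" where
  "acyclic_labeling Q \<sigma> \<longleftrightarrow> acyclic (orientation Q \<sigma>)"

definition Qplus :: "('v,'e) quiver \<Rightarrow> ('e \<Rightarrow> sign) \<Rightarrow> ('v \<times> 'e list \<times> 'v) set" where
  "Qplus Q \<sigma> = gen_wide (free_cat Q) {arr_mor Q e | e. e \<in> Arrs Q \<and> \<sigma> e = Plus}"

definition Qminus :: "('v,'e) quiver \<Rightarrow> ('e \<Rightarrow> sign) \<Rightarrow> ('v \<times> 'e list \<times> 'v) set" where
  "Qminus Q \<sigma> = gen_wide (free_cat Q) {arr_mor Q e | e. e \<in> Arrs Q \<and> \<sigma> e = Minus}"

end

theory Submission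
  imports Defs
begin

text \<open>In a quiver of diameter 1 no two arrows are composable, so the only morphisms of
  \<open>F(Q)\<close> are the identities and the arrows of \<open>Q\<close>, and a wide subcategory is the set of
  identities together with some set of arrows. An arrow \<open>f : a \<rightarrow> b\<close> has exactly the two
  candidate factorisations \<open>f \<circ> id\<^sub>a\<close> and \<open>id\<^sub>b \<circ> f\<close>, so unique factorisation says that
  every arrow lies in exactly one of \<open>J\<^sup>+\<close> and \<open>J\<^sup>-\<close>: the pair comes from a labeling \<open>\<sigma>\<close>.
  The degree conditions then say that the degree strictly increases along the orientation
  of \<open>\<sigma>\<close>, and a finite relation admits such a rank function iff it is acyclic.\<close>

lemma finite_acyclic_iff_rank:
  fixes r :: "('a \<times> 'a) set"
  assumes "finite r"
  shows "acyclic r \<longleftrightarrow> (\<exists>rk :: 'a \<Rightarrow> nat. \<forall>(u, v)\<in>r. rk u < rk v)"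
proof
  assume acyc: "acyclic r"
  define rk where "rk v = card {u. (u, v) \<in> r\<^sup>+}" for v
  have fin_pred: "finite {u. (u, v) \<in> r\<^sup>+}" for v
  proof (rule finite_subset)
    show "{u. (u, v) \<in> r\<^sup>+} \<subseteq> fst ` r\<^sup>+" by force
    show "finite (fst ` r\<^sup>+)" using assms by (simp add: finite_trancl)
  qed
  have "rk u < rk v" if uv: "(u, v) \<in> r" for u v
  proof -
    have "{w. (w, u) \<in> r\<^sup>+} \<subset> {w. (w, v) \<in> r\<^sup>+}"
      using uv acyc by (auto simp: acyclic_def)
    then show ?thesis unfolding rk_def using fin_pred psubset_card_mono by blast
  qed
  then show "\<exists>rk :: 'a \<Rightarrow> nat. \<forall>(u, v)\<in>r. rk u < rk v" by blast
next
  assume "\<exists>rk :: 'a \<Rightarrow> nat. \<forall>(u, v)\<in>r. rk u < rk v"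
  then obtain rk :: "'a \<Rightarrow> nat" where "\<forall>(u, v)\<in>r. rk u < rk v" by blast
  then have "r \<subseteq> inv_image less_than rk" by auto
  then show "acyclic r" by (meson acyclic_subset wf_acyclic wf_inv_image wf_less_than)
qed

lemma free_cat_simps [simp]:
  "Ob (free_cat Q) = Verts Q"
  "Mor (free_cat Q) = {(a, es, b). is_path Q a es b}"
  "Dom (free_cat Q) = fst"
  "Cod (free_cat Q) = (\<lambda>f. snd (snd f))"
  "Idm (free_cat Q) = (\<lambda>a. (a, [], a))"
  "Comp (free_cat Q) = (\<lambda>g f. (fst f, fst (snd f) @ fst (snd g), snd (snd g)))"
  by (auto simp: free_cat_def fun_eq_iff)

lemma arr_mor_eq_iff [simp]: "arr_mor Q e = arr_mor Q e' \<longleftrightarrow> e = e'"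
  by (auto simp: arr_mor_def)

lemma arr_mor_neq_identity [simp]: "arr_mor Q e \<noteq> (a, [], b)"
  by (auto simp: arr_mor_def)

lemma arr_mor_components [simp]:
  "fst (arr_mor Q e) = src Q e" "fst (snd (arr_mor Q e)) = [e]" "snd (snd (arr_mor Q e)) = tgt Q e"
  by (auto simp: arr_mor_def)

definition identity_mors :: "('v, 'e) quiver \<Rightarrow> ('v \<times> 'e list \<times> 'v) set" where
  "identity_mors Q = (\<lambda>a. (a, [], a)) ` Verts Q"

definition arrow_mors :: "('v, 'e) quiver \<Rightarrow> ('v \<times> 'e list \<times> 'v) set" where
  "arrow_mors Q = arr_mor Q ` Arrs Q"

lemma diameter_one_not_composable:
  "diameter_one Q \<Longrightarrow> e \<in> Arrs Q \<Longrightarrow> e' \<in> Arrs Q \<Longrightarrow> tgt Q e \<noteq> src Q e'"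
  unfolding diameter_one_def by blast

lemma Mor_free_cat_diameter_one:
  assumes "finite_quiver Q" and "diameter_one Q"
  shows "Mor (free_cat Q) = identity_mors Q \<union> arrow_mors Q"
proof (intro equalityI subsetI)
  fix f assume "f \<in> Mor (free_cat Q)"
  then obtain a es b where f: "f = (a, es, b)" and p: "is_path Q a es b" by auto
  consider "es = []" | e where "es = [e]" | e e' es' where "es = e # e' # es'"
    by (metis list.exhaust)
  then show "f \<in> identity_mors Q \<union> arrow_mors Q"
  proof cases
    case 1
    then show ?thesis using f p by (auto simp: is_path_def identity_mors_def)
  next
    case 2
    then show ?thesis using f p by (auto simp: is_path_def arrow_mors_def arr_mor_def)
  next
    case 3
    then have "tgt Q e = src Q e'" "e \<in> Arrs Q" "e' \<in> Arrs Q"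
      using p unfolding is_path_def by (auto dest: spec[of _ 0])
    then show ?thesis using diameter_one_not_composable[OF assms(2)] by blast
  qed
next
  fix f assume "f \<in> identity_mors Q \<union> arrow_mors Q"
  then show "f \<in> Mor (free_cat Q)"
    using assms(1) unfolding identity_mors_def arrow_mors_def finite_quiver_def
    by (auto simp: arr_mor_def is_path_def)
qed

lemma wide_subcat_free_cat_decompose:
  assumes "finite_quiver Q" and "diameter_one Q" and "wide_subcat (free_cat Q) T"
  shows "T = identity_mors Q \<union> (T \<inter> arrow_mors Q)"
  using assms Mor_free_cat_diameter_one[OF assms(1,2)]
  unfolding wide_subcat_def identity_mors_def by auto

lemma wide_subcat_identity_mors_Un:
  assumes "finite_quiver Q" and "diameter_one Q" and "S \<subseteq> arrow_mors Q"
  shows "wide_subcat (free_cat Q) (identity_mors Q \<union> S)"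
  unfolding wide_subcat_def
proof (intro conjI ballI impI)
  show "identity_mors Q \<union> S \<subseteq> Mor (free_cat Q)"
    using assms Mor_free_cat_diameter_one by blast
  show "Idm (free_cat Q) a \<in> identity_mors Q \<union> S" if "a \<in> Ob (free_cat Q)" for a
    using that by (simp add: identity_mors_def)
  fix f g
  assume f: "f \<in> identity_mors Q \<union> S" and g: "g \<in> identity_mors Q \<union> S"
    and fg: "Cod (free_cat Q) f = Dom (free_cat Q) g"
  show "Comp (free_cat Q) g f \<in> identity_mors Q \<union> S"
  proof (cases "f \<in> identity_mors Q \<or> g \<in> identity_mors Q")
    case True
    then show ?thesis using f g fg by (auto simp: identity_mors_def)
  next
    case False
    obtain e e' where "e \<in> Arrs Q" "e' \<in> Arrs Q" "f = arr_mor Q e" "g = arr_mor Q e'"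
      using False f g assms(3) unfolding arrow_mors_def by blast
    then show ?thesis using fg diameter_one_not_composable[OF assms(2)] by auto
  qed
qed

lemma gen_wide_free_cat:
  assumes "finite_quiver Q" and "diameter_one Q" and "S \<subseteq> arrow_mors Q"
  shows "gen_wide (free_cat Q) S = identity_mors Q \<union> S"
proof -
  have "identity_mors Q \<union> S \<subseteq> T" if "wide_subcat (free_cat Q) T" "S \<subseteq> T" for T
    using that by (auto simp: wide_subcat_def identity_mors_def)
  then show ?thesis
    using wide_subcat_identity_mors_Un[OF assms] unfolding gen_wide_def by blast
qed

lemma gen_wide_labelled_arrows:
  assumes "finite_quiver Q" and "diameter_one Q"
  shows "gen_wide (free_cat Q) {arr_mor Q e | e. e \<in> Arrs Q \<and> \<sigma> e = s}
    = identity_mors Q \<union> arr_mor Q ` {e \<in> Arrs Q. \<sigma> e = s}"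
  using gen_wide_free_cat[OF assms, of "arr_mor Q ` {e \<in> Arrs Q. \<sigma> e = s}"]
  by (auto simp: arrow_mors_def setcompr_eq_image)

definition factorizations :: "('o, 'm) cat \<Rightarrow> 'm set \<Rightarrow> 'm set \<Rightarrow> 'm \<Rightarrow> ('m \<times> 'm) set" where
  "factorizations C Jp Jm f =
     {p \<in> Jm \<times> Jp. Cod C (fst p) = Dom C (snd p) \<and> Comp C (snd p) (fst p) = f}"

lemma factorizations_identity:
  assumes "wide_subcat (free_cat Q) Jp" and "wide_subcat (free_cat Q) Jm" and "a \<in> Verts Q"
  shows "factorizations (free_cat Q) Jp Jm (a, [], a) = {((a, [], a), (a, [], a))}"
    (is "?F = ?R")
proof (intro equalityI subsetI)
  fix p assume "p \<in> ?F"
  then show "p \<in> ?R"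
    using assms unfolding factorizations_def wide_subcat_def
    by (auto simp: is_path_def)
next
  fix p assume "p \<in> ?R"
  then show "p \<in> ?F"
    using assms unfolding factorizations_def wide_subcat_def by auto
qed

lemma factorizations_arrow:
  assumes "wide_subcat (free_cat Q) Jp" and "wide_subcat (free_cat Q) Jm"
  shows "factorizations (free_cat Q) Jp Jm (arr_mor Q e) =
    {p. arr_mor Q e \<in> Jm \<and> p = (arr_mor Q e, (tgt Q e, [], tgt Q e))
      \<or> arr_mor Q e \<in> Jp \<and> p = ((src Q e, [], src Q e), arr_mor Q e)}"
    (is "?F = ?R")
proof (intro equalityI subsetI)
  fix p assume "p \<in> ?F"
  \<comment> \<open>the two path components of \<open>p\<close> concatenate to \<open>[e]\<close>, so one of them is empty\<close>
  then show "p \<in> ?R"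
    using assms unfolding factorizations_def wide_subcat_def
    by (auto simp: is_path_def arr_mor_def append_eq_Cons_conv)
next
  fix p assume "p \<in> ?R"
  then show "p \<in> ?F"
    using assms unfolding factorizations_def wide_subcat_def
    by (auto simp: is_path_def arr_mor_def)
qed

lemma reedy_structure_iff_factorizations:
  "reedy_structure C Jp Jm \<longleftrightarrow>
    wide_subcat C Jp \<and> wide_subcat C Jm \<and>
    (\<exists>deg :: 'o \<Rightarrow> nat.
       (\<forall>f\<in>Jp. f \<noteq> Idm C (Dom C f) \<longrightarrow> deg (Dom C f) < deg (Cod C f)) \<and>
       (\<forall>f\<in>Jm. f \<noteq> Idm C (Dom C f) \<longrightarrow> deg (Cod C f) < deg (Dom C f))) \<and>
    (\<forall>f\<in>Mor C. \<exists>!p. p \<in> factorizations C Jp Jm f)"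
  unfolding reedy_structure_def factorizations_def by auto

lemma unique_factorization_free_cat_iff:
  assumes "finite_quiver Q" and "diameter_one Q"
    and Jp: "wide_subcat (free_cat Q) Jp" and Jm: "wide_subcat (free_cat Q) Jm"
  shows "(\<forall>f\<in>Mor (free_cat Q). \<exists>!p. p \<in> factorizations (free_cat Q) Jp Jm f)
    \<longleftrightarrow> (\<forall>e\<in>Arrs Q. arr_mor Q e \<in> Jp \<longleftrightarrow> arr_mor Q e \<notin> Jm)"
proof -
  have "\<exists>!p. p \<in> factorizations (free_cat Q) Jp Jm f" if "f \<in> identity_mors Q" for f
    using that factorizations_identity[OF Jp Jm] by (auto simp: identity_mors_def)
  moreover have "(\<exists>!p. p \<in> factorizations (free_cat Q) Jp Jm (arr_mor Q e))
      \<longleftrightarrow> (arr_mor Q e \<in> Jp \<longleftrightarrow> arr_mor Q e \<notin> Jm)" for e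
  proof -
    have "(arr_mor Q e, (tgt Q e, [], tgt Q e)) \<noteq> ((src Q e, [], src Q e), arr_mor Q e)"
      by simp
    then show ?thesis unfolding factorizations_arrow[OF Jp Jm] by blast
  qed
  ultimately show ?thesis
    unfolding Mor_free_cat_diameter_one[OF assms(1,2)] arrow_mors_def by blast
qed

lemma ball_nonidentity_free_cat_iff:
  assumes "T \<subseteq> identity_mors Q \<union> arrow_mors Q"
  shows "(\<forall>f\<in>T. f \<noteq> Idm (free_cat Q) (Dom (free_cat Q) f) \<longrightarrow>
            P (Dom (free_cat Q) f) (Cod (free_cat Q) f))
    \<longleftrightarrow> (\<forall>e\<in>Arrs Q. arr_mor Q e \<in> T \<longrightarrow> P (src Q e) (tgt Q e))"
  using assms unfolding identity_mors_def arrow_mors_def by (auto simp: arr_mor_def)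

lemma reedy_structure_free_cat_iff:
  assumes "finite_quiver Q" and "diameter_one Q"
  shows "reedy_structure (free_cat Q) Jp Jm \<longleftrightarrow>
    wide_subcat (free_cat Q) Jp \<and> wide_subcat (free_cat Q) Jm \<and>
    (\<forall>e\<in>Arrs Q. arr_mor Q e \<in> Jp \<longleftrightarrow> arr_mor Q e \<notin> Jm) \<and>
    (\<exists>deg :: 'v \<Rightarrow> nat. \<forall>e\<in>Arrs Q.
        (arr_mor Q e \<in> Jp \<longrightarrow> deg (src Q e) < deg (tgt Q e)) \<and>
        (arr_mor Q e \<in> Jm \<longrightarrow> deg (tgt Q e) < deg (src Q e)))"
proof (cases "wide_subcat (free_cat Q) Jp \<and> wide_subcat (free_cat Q) Jm")
  case True
  then have "Jp \<subseteq> identity_mors Q \<union> arrow_mors Q" "Jm \<subseteq> identity_mors Q \<union> arrow_mors Q"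
    using Mor_free_cat_diameter_one[OF assms] by (auto simp: wide_subcat_def)
  note nonidentities = this[THEN ball_nonidentity_free_cat_iff]
  have raising: "(\<forall>f\<in>Jp. f \<noteq> Idm (free_cat Q) (Dom (free_cat Q) f) \<longrightarrow>
        deg (Dom (free_cat Q) f) < deg (Cod (free_cat Q) f))
      \<longleftrightarrow> (\<forall>e\<in>Arrs Q. arr_mor Q e \<in> Jp \<longrightarrow> deg (src Q e) < deg (tgt Q e))"
    for deg :: "'v \<Rightarrow> nat"
    by (rule nonidentities(1))
  have lowering: "(\<forall>f\<in>Jm. f \<noteq> Idm (free_cat Q) (Dom (free_cat Q) f) \<longrightarrow>
        deg (Cod (free_cat Q) f) < deg (Dom (free_cat Q) f))
      \<longleftrightarrow> (\<forall>e\<in>Arrs Q. arr_mor Q e \<in> Jm \<longrightarrow> deg (tgt Q e) < deg (src Q e))"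
    for deg :: "'v \<Rightarrow> nat"
    by (rule nonidentities(2))
  show ?thesis
    unfolding reedy_structure_iff_factorizations raising lowering
      unique_factorization_free_cat_iff[OF assms True[THEN conjunct1] True[THEN conjunct2]]
    by blast
next
  case False
  then show ?thesis by (auto simp: reedy_structure_def)
qed

lemma Qplus_eq:
  assumes "finite_quiver Q" and "diameter_one Q"
  shows "Qplus Q \<sigma> = identity_mors Q \<union> arr_mor Q ` {e \<in> Arrs Q. \<sigma> e = Plus}"
  unfolding Qplus_def by (rule gen_wide_labelled_arrows[OF assms])

lemma Qminus_eq:
  assumes "finite_quiver Q" and "diameter_one Q"
  shows "Qminus Q \<sigma> = identity_mors Q \<union> arr_mor Q ` {e \<in> Arrs Q. \<sigma> e = Minus}"
  unfolding Qminus_def by (rule gen_wide_labelled_arrows[OF assms])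

lemma arr_mor_in_Qplus_iff:
  assumes "finite_quiver Q" and "diameter_one Q" and "e \<in> Arrs Q"
  shows "arr_mor Q e \<in> Qplus Q \<sigma> \<longleftrightarrow> \<sigma> e = Plus"
  using assms(3) by (auto simp: Qplus_eq[OF assms(1,2)] identity_mors_def)

lemma arr_mor_in_Qminus_iff:
  assumes "finite_quiver Q" and "diameter_one Q" and "e \<in> Arrs Q"
  shows "arr_mor Q e \<in> Qminus Q \<sigma> \<longleftrightarrow> \<sigma> e = Minus"
  using assms(3) by (auto simp: Qminus_eq[OF assms(1,2)] identity_mors_def)

lemma wide_subcat_Qplus:
  assumes "finite_quiver Q" and "diameter_one Q"
  shows "wide_subcat (free_cat Q) (Qplus Q \<sigma>)"
  unfolding Qplus_eq[OF assms] by (rule wide_subcat_identity_mors_Un[OF assms])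
    (auto simp: arrow_mors_def)

lemma wide_subcat_Qminus:
  assumes "finite_quiver Q" and "diameter_one Q"
  shows "wide_subcat (free_cat Q) (Qminus Q \<sigma>)"
  unfolding Qminus_eq[OF assms] by (rule wide_subcat_identity_mors_Un[OF assms])
    (auto simp: arrow_mors_def)

lemma finite_orientation:
  assumes "finite (Arrs Q)"
  shows "finite (orientation Q \<sigma>)"
proof (rule finite_subset)
  show "orientation Q \<sigma> \<subseteq> (\<lambda>e. (src Q e, tgt Q e)) ` Arrs Q \<union> (\<lambda>e. (tgt Q e, src Q e)) ` Arrs Q"
    unfolding orientation_def by auto
  show "finite \<dots>" using assms by simp
qed

lemma ball_orientation_iff:
  "(\<forall>(u, v)\<in>orientation Q \<sigma>. R u v) \<longleftrightarrow>
    (\<forall>e\<in>Arrs Q. (\<sigma> e = Plus \<longrightarrow> R (src Q e) (tgt Q e)) \<and>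
                 (\<sigma> e = Minus \<longrightarrow> R (tgt Q e) (src Q e)))"
  unfolding orientation_def by blast

lemma reedy_structure_Qplus_Qminus_iff:
  fixes Q :: "('v, 'e) quiver"
  assumes "finite_quiver Q" and "diameter_one Q"
  shows "reedy_structure (free_cat Q) (Qplus Q \<sigma>) (Qminus Q \<sigma>) \<longleftrightarrow> acyclic_labeling Q \<sigma>"
proof -
  have exclusive: "\<forall>e\<in>Arrs Q. arr_mor Q e \<in> Qplus Q \<sigma> \<longleftrightarrow> arr_mor Q e \<notin> Qminus Q \<sigma>"
  proof
    fix e assume "e \<in> Arrs Q"
    then show "arr_mor Q e \<in> Qplus Q \<sigma> \<longleftrightarrow> arr_mor Q e \<notin> Qminus Q \<sigma>"
      by (cases "\<sigma> e") (simp_all add: arr_mor_in_Qplus_iff[OF assms] arr_mor_in_Qminus_iff[OF assms])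
  qed
  have degree: "(\<forall>e\<in>Arrs Q.
        (arr_mor Q e \<in> Qplus Q \<sigma> \<longrightarrow> deg (src Q e) < deg (tgt Q e)) \<and>
        (arr_mor Q e \<in> Qminus Q \<sigma> \<longrightarrow> deg (tgt Q e) < deg (src Q e)))
      \<longleftrightarrow> (\<forall>(u, v)\<in>orientation Q \<sigma>. deg u < deg v)" for deg :: "'v \<Rightarrow> nat"
    unfolding ball_orientation_iff
    by (auto simp: arr_mor_in_Qplus_iff[OF assms] arr_mor_in_Qminus_iff[OF assms])
  have "finite (orientation Q \<sigma>)"
    using assms(1) finite_orientation by (auto simp: finite_quiver_def)
  then show ?thesis
    unfolding reedy_structure_free_cat_iff[OF assms] degree acyclic_labeling_def
    using wide_subcat_Qplus[OF assms] wide_subcat_Qminus[OF assms] exclusive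
    by (simp add: finite_acyclic_iff_rank)
qed

definition labeling_of :: "('v, 'e) quiver \<Rightarrow> ('v \<times> 'e list \<times> 'v) set \<Rightarrow> 'e \<Rightarrow> sign" where
  "labeling_of Q Jp = restrict (\<lambda>e. if arr_mor Q e \<in> Jp then Plus else Minus) (Arrs Q)"

lemma labeling_of_in_labelings: "labeling_of Q Jp \<in> labelings Q"
  by (simp add: labeling_of_def labelings_def)

lemma reedy_structure_eq_Qplus_Qminus:
  assumes "finite_quiver Q" and "diameter_one Q" and "reedy_structure (free_cat Q) Jp Jm"
  shows "Jp = Qplus Q (labeling_of Q Jp)" and "Jm = Qminus Q (labeling_of Q Jp)"
proof -
  have wide: "wide_subcat (free_cat Q) Jp" "wide_subcat (free_cat Q) Jm"
    and exclusive: "\<forall>e\<in>Arrs Q. arr_mor Q e \<in> Jp \<longleftrightarrow> arr_mor Q e \<notin> Jm"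
    using iffD1[OF reedy_structure_free_cat_iff[OF assms(1,2)] assms(3)] by auto
  have "Jp = identity_mors Q \<union> (Jp \<inter> arrow_mors Q)"
    by (rule wide_subcat_free_cat_decompose[OF assms(1,2) wide(1)])
  also have "\<dots> = identity_mors Q \<union> arr_mor Q ` {e \<in> Arrs Q. labeling_of Q Jp e = Plus}"
    by (auto simp: labeling_of_def arrow_mors_def)
  also have "\<dots> = Qplus Q (labeling_of Q Jp)"
    by (rule Qplus_eq[OF assms(1,2), symmetric])
  finally show "Jp = Qplus Q (labeling_of Q Jp)" .
  have "Jm = identity_mors Q \<union> (Jm \<inter> arrow_mors Q)"
    by (rule wide_subcat_free_cat_decompose[OF assms(1,2) wide(2)])
  also have "\<dots> = identity_mors Q \<union> arr_mor Q ` {e \<in> Arrs Q. labeling_of Q Jp e = Minus}"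
  proof -
    have "Jm \<inter> arrow_mors Q = arr_mor Q ` {e \<in> Arrs Q. arr_mor Q e \<notin> Jp}"
      using exclusive unfolding arrow_mors_def by blast
    then show ?thesis by (auto simp: labeling_of_def)
  qed
  also have "\<dots> = Qminus Q (labeling_of Q Jp)"
    by (rule Qminus_eq[OF assms(1,2), symmetric])
  finally show "Jm = Qminus Q (labeling_of Q Jp)" .
qed

lemma Qplus_inj_on_labelings:
  assumes "finite_quiver Q" and "diameter_one Q"
  shows "inj_on (Qplus Q) (labelings Q)"
proof (rule inj_onI)
  fix \<sigma> \<tau> assume "\<sigma> \<in> labelings Q" "\<tau> \<in> labelings Q" and eq: "Qplus Q \<sigma> = Qplus Q \<tau>"
  then have "\<sigma> \<in> Arrs Q \<rightarrow>\<^sub>E UNIV" "\<tau> \<in> Arrs Q \<rightarrow>\<^sub>E UNIV"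
    by (simp_all add: labelings_def)
  then show "\<sigma> = \<tau>"
  proof (rule PiE_ext)
    fix e assume e: "e \<in> Arrs Q"
    have "\<sigma> e = Plus \<longleftrightarrow> \<tau> e = Plus"
      using eq arr_mor_in_Qplus_iff[OF assms e] by metis
    then show "\<sigma> e = \<tau> e" by (cases "\<sigma> e"; cases "\<tau> e") simp_all
  qed
qed

lemma reedy_structures_free_cat_eq_image:
  assumes "finite_quiver Q" and "diameter_one Q"
  shows "reedy_structures (free_cat Q) =
    (\<lambda>\<sigma>. (Qplus Q \<sigma>, Qminus Q \<sigma>)) ` {\<sigma> \<in> labelings Q. acyclic_labeling Q \<sigma>}"
proof (intro equalityI subsetI)
  fix J assume "J \<in> reedy_structures (free_cat Q)"
  then obtain Jp Jm where J: "J = (Jp, Jm)" and reedy: "reedy_structure (free_cat Q) Jp Jm"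
    by (auto simp: reedy_structures_def)
  define \<sigma> where "\<sigma> = labeling_of Q Jp"
  have J_eq: "J = (Qplus Q \<sigma>, Qminus Q \<sigma>)"
    using J reedy_structure_eq_Qplus_Qminus[OF assms reedy] unfolding \<sigma>_def by simp
  then have "acyclic_labeling Q \<sigma>"
    using J reedy reedy_structure_Qplus_Qminus_iff[OF assms] by simp
  then show "J \<in> (\<lambda>\<sigma>. (Qplus Q \<sigma>, Qminus Q \<sigma>)) ` {\<sigma> \<in> labelings Q. acyclic_labeling Q \<sigma>}"
    using J_eq labeling_of_in_labelings unfolding \<sigma>_def by blast
next
  fix J assume "J \<in> (\<lambda>\<sigma>. (Qplus Q \<sigma>, Qminus Q \<sigma>)) ` {\<sigma> \<in> labelings Q. acyclic_labeling Q \<sigma>}"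
  then show "J \<in> reedy_structures (free_cat Q)"
    unfolding reedy_structures_def using reedy_structure_Qplus_Qminus_iff[OF assms] by blast
qed

theorem mainTheorem5:
  fixes Q :: "('v, 'e) quiver"
  assumes "finite_quiver Q" and "diameter_one Q"
  shows "bij_betw (\<lambda>\<sigma>. (Qplus Q \<sigma>, Qminus Q \<sigma>))
           {\<sigma> \<in> labelings Q. acyclic_labeling Q \<sigma>}
           (reedy_structures (free_cat Q))"
proof (rule bij_betw_imageI)
  show "inj_on (\<lambda>\<sigma>. (Qplus Q \<sigma>, Qminus Q \<sigma>)) {\<sigma> \<in> labelings Q. acyclic_labeling Q \<sigma>}"
    using Qplus_inj_on_labelings[OF assms] unfolding inj_on_def by blast
  show "(\<lambda>\<sigma>. (Qplus Q \<sigma>, Qminus Q \<sigma>)) ` {\<sigma> \<in> labelings Q. acyclic_labeling Q \<sigma>}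
      = reedy_structures (free_cat Q)"
    using reedy_structures_free_cat_eq_image[OF assms] by simp
qed

end
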